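(* Let $m\ge 2$ be an integer and let $T_m$ be the $m$-th Chebyshev polynomial, viewed as a map $T_m:\mathbb{Z}_2\to\mathbb{Z}_2$. (i) If $m$ is even, then $1$ is an attracting fixed point of $T_m$, and every $x\in\mathbb{Z}_2$ lies in its attracting basin, i.e. $\lim_{k\to\infty}T_m^{k}(x)=1$ for all $x\in\mathbb{Z}_2$. (ii) If $m$ is odd, let $s=s(m)\ge 2$ be as defined in the context. Then $\mathbb{Z}_2$ decomposes as the disjoint union $$\mathbb{Z}_2=\{0,1,-1\}\sqcup E_1\sqcup E_2\sqcup E_3,$$ where $$E_1=\bigsqcup_{n\ge1}\bigsqcup_{0\le i<2^{s-1}}E_1(n,i),\qquad E_2=\bigsqcup_{n\ge2}\bigsqcup_{0\le i<2^{s}}E_2(n,i),\qquad E_3=\bigsqcup_{n\ge2}\bigsqcup_{0\le i<2^{s}}E_3(n,i),$$ with $$E_1(n,i)=2^n(1+2i)+2^{n+s}\mathbb{Z}_2\ (n\ge1,\ 0\le i<2^{s-1}),$$ $$E_2(n,i)=1+2^n(1+2i)+2^{n+s+1}\mathbb{Z}_2\ (n\ge2,\ 0\le i<2^{s}),$$ $$E_3(n,i)=-1+2^n(1+2i)+2^{n+s+1}\mathbb{Z}_2\ (n\ge2,\ 0\le i<2^{s}).$$ The points $0,1,-1$ are fixed points of $T_m$, and each set $E_1(n,i)$, $E_2(n,i)$, $E_3(n,i)$ is invariant under $T_m$ and the restriction of $T_m$ to it is minimal (every orbit in it is dense in it).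
   Context: $\mathbb{Z}_2$ denotes the ring of $2$-adic integers. For an integer $m\ge0$, the $m$-th Chebyshev polynomial is $$T_m(x)=\sum_{k=0}^{\lfloor m/2\rfloor}(-1)^k\frac{m}{m-k}\binom{m-k}{k}2^{m-2k-1}x^{m-2k}.$$ For an odd integer $m\ge3$, define $s(m)=\max\{n\ge2:\ 2^n\mid(m+1)\text{ or }2^n\mid(m-1)\}$; equivalently, $m=2^{s}q+1$ or $m=2^{s}q-1$ with $q\ge1$ odd and $s=s(m)\ge 2$. $T_m^k$ denotes the $k$-th iterate of $T_m$. A continuous map $f:E\to E$ is minimal if every orbit is dense in $E$. *)

theory Defs
  imports Complex_Main
begin

text \<open>The ring of 2-adic integers, realised as the inverse limit of the rings Z/2^n Z:
  a 2-adic integer is a compatible sequence of residues x n in [0, 2^n).\<close>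

definition Z2 :: "(nat \<Rightarrow> int) set" where
  "Z2 = {x. (\<forall>n. 0 \<le> x n \<and> x n < 2 ^ n) \<and> (\<forall>n. x (Suc n) mod 2 ^ n = x n)}"

definition z2_of_int :: "int \<Rightarrow> nat \<Rightarrow> int" where
  "z2_of_int c = (\<lambda>n. c mod 2 ^ n)"

definition z2_add :: "(nat \<Rightarrow> int) \<Rightarrow> (nat \<Rightarrow> int) \<Rightarrow> nat \<Rightarrow> int" where
  "z2_add x y = (\<lambda>n. (x n + y n) mod 2 ^ n)"

definition z2_mul :: "(nat \<Rightarrow> int) \<Rightarrow> (nat \<Rightarrow> int) \<Rightarrow> nat \<Rightarrow> int" where
  "z2_mul x y = (\<lambda>n. (x n * y n) mod 2 ^ n)"

definition z2_dist :: "(nat \<Rightarrow> int) \<Rightarrow> (nat \<Rightarrow> int) \<Rightarrow> real" where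
  "z2_dist x y = (if x = y then 0 else (1/2) ^ (GREATEST n. x n = y n))"

definition cheb :: "nat \<Rightarrow> real \<Rightarrow> real" where
  "cheb m x = (\<Sum>k = 0..m div 2. (-1) ^ k * (real m / real (m - k)) * real ((m - k) choose k)
       * 2 powr (real m - 2 * real k - 1) * x ^ (m - 2 * k))"

text \<open>T_m on integers (the value of the formula is an integer for integer arguments).\<close>
definition cheb_int :: "nat \<Rightarrow> int \<Rightarrow> int" where
  "cheb_int m a = \<lfloor>cheb m (real_of_int a)\<rfloor>"

text \<open>T_m as a map on Z_2 (the polynomial has integer coefficients, so it acts levelwise).\<close>
definition Tz :: "nat \<Rightarrow> (nat \<Rightarrow> int) \<Rightarrow> nat \<Rightarrow> int" where
  "Tz m x = (\<lambda>n. cheb_int m (x n) mod 2 ^ n)"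

definition s_of :: "nat \<Rightarrow> nat" where
  "s_of m = (GREATEST n. n \<ge> 2 \<and> (2 ^ n dvd m + 1 \<or> 2 ^ n dvd m - 1))"

definition coset2 :: "int \<Rightarrow> nat \<Rightarrow> (nat \<Rightarrow> int) set" where
  "coset2 a k = {z2_add (z2_of_int a) (z2_mul (z2_of_int (2 ^ k)) z) | z. z \<in> Z2}"

definition Epiece :: "nat \<Rightarrow> nat \<times> nat \<times> nat \<Rightarrow> (nat \<Rightarrow> int) set" where
  "Epiece s jni = (case jni of (j, n, i) \<Rightarrow>
     if j = 1 then coset2 (2 ^ n * (1 + 2 * int i)) (n + s)
     else if j = 2 then coset2 (1 + 2 ^ n * (1 + 2 * int i)) (n + s + 1)
     else coset2 (-1 + 2 ^ n * (1 + 2 * int i)) (n + s + 1))"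

definition Eidx :: "nat \<Rightarrow> (nat \<times> nat \<times> nat) set" where
  "Eidx s = {(1, n, i) | n i. n \<ge> 1 \<and> i < 2 ^ (s - 1)}
          \<union> {(2, n, i) | n i. n \<ge> 2 \<and> i < 2 ^ s}
          \<union> {(3, n, i) | n i. n \<ge> 2 \<and> i < 2 ^ s}"

definition minimal_on :: "((nat \<Rightarrow> int) \<Rightarrow> nat \<Rightarrow> int) \<Rightarrow> (nat \<Rightarrow> int) set \<Rightarrow> bool" where
  "minimal_on f E = (\<forall>x\<in>E. \<forall>y\<in>E. \<forall>e>0. \<exists>k. z2_dist ((f ^^ k) x) y < e)"

end

theory Submission
  imports Defs
begin

text \<open>For even \<open>m\<close> the doubling formula \<open>T\<^sub>2\<^sub>k(y) - 1 = 2 (T\<^sub>k(y) - 1)(T\<^sub>k(y) + 1)\<close> shows that each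
  application of \<open>T\<^sub>m\<close> gains one binary digit of agreement with \<open>1\<close>.

  For odd \<open>m = 2a + 1\<close> one has \<open>T\<^sub>m(x) - x = 2 (x\<^sup>2 - 1) U\<^sub>a(x) U\<^sub>a\<^sub>-\<^sub>1(x)\<close>, and one of \<open>a\<close>, \<open>a + 1\<close>
  is \<open>2\<^sup>s\<^sup>-\<^sup>1\<close> times an odd number. Counting 2-adic valuations then shows that on each piece
  \<open>b + 2\<^sup>K\<int>\<^sub>2\<close> the map moves every point by exactly \<open>2\<^sup>K\<close> modulo \<open>2\<^sup>K\<^sup>+\<^sup>1\<close>. Since moreover
  \<open>T\<^sub>m(x + h) \<equiv> T\<^sub>m(x) + h (mod 4h)\<close> for 2-adic increments \<open>h\<close>, iterating \<open>2\<^sup>j\<close> times moves points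
  by exactly \<open>2\<^sup>K\<^sup>+\<^sup>j\<close>, so modulo every \<open>2\<^sup>N\<close> the map permutes the residues of the piece in a
  single cycle, which is minimality. The pieces arise by expanding \<open>x - c\<close>, \<open>c \<in> {0, 1, -1}\<close>,
  up to its first nonzero binary digit.\<close>

section \<open>Chebyshev polynomials\<close>

fun chebT :: "nat \<Rightarrow> 'a::comm_ring_1 \<Rightarrow> 'a" where
  "chebT 0 x = 1"
| "chebT (Suc 0) x = x"
| "chebT (Suc (Suc n)) x = 2 * x * chebT (Suc n) x - chebT n x"

text \<open>\<open>chebS n\<close> is the Chebyshev polynomial of the second kind \<open>U\<^sub>n\<^sub>-\<^sub>1\<close>.\<close>

fun chebS :: "nat \<Rightarrow> 'a::comm_ring_1 \<Rightarrow> 'a" where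
  "chebS 0 x = 0"
| "chebS (Suc 0) x = 1"
| "chebS (Suc (Suc n)) x = 2 * x * chebS (Suc n) x - chebS n x"

lemma chebT_chebS_Suc:
  "chebT (Suc n) x = x * chebT n x - (1 - x\<^sup>2) * chebS n x \<and> chebS (Suc n) x = x * chebS n x + chebT n x"
proof (induction n rule: induct_nat_012)
  case (ge2 n)
  then have T: "chebT (Suc n) x = x * chebT n x - (1 - x\<^sup>2) * chebS n x"
    and S: "chebS (Suc n) x = x * chebS n x + chebT n x" by auto
  show ?case unfolding chebT.simps chebS.simps T S by (simp add: algebra_simps power2_eq_square)
qed (auto simp: algebra_simps power2_eq_square)

lemma chebT_Suc: "chebT (Suc n) x = x * chebT n x - (1 - x\<^sup>2) * chebS n x"
  using chebT_chebS_Suc by blast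

lemma chebS_Suc: "chebS (Suc n) x = x * chebS n x + chebT n x"
  using chebT_chebS_Suc by blast

lemma chebT_chebS_pell: "chebT n x ^ 2 + (1 - x\<^sup>2) * chebS n x ^ 2 = 1"
proof (induction n)
  case (Suc n)
  have "chebT (Suc n) x ^ 2 + (1 - x\<^sup>2) * chebS (Suc n) x ^ 2 = chebT n x ^ 2 + (1 - x\<^sup>2) * chebS n x ^ 2"
    unfolding chebT_Suc chebS_Suc by (simp add: algebra_simps power2_eq_square)
  with Suc show ?case by simp
qed simp

lemma chebT_chebS_add:
  "chebT (a + b) x = chebT a x * chebT b x - (1 - x\<^sup>2) * chebS a x * chebS b x \<and>
   chebS (a + b) x = chebS a x * chebT b x + chebT a x * chebS b x"
proof (induction b rule: induct_nat_012)
  case 1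
  then show ?case using chebT_Suc[of a x] chebS_Suc[of a x] by (simp add: algebra_simps)
next
  case (ge2 n)
  have e: "a + Suc (Suc n) = Suc (Suc (a + n))" by simp
  from ge2 have IH: "chebT (a + n) x = chebT a x * chebT n x - (1 - x\<^sup>2) * chebS a x * chebS n x"
    "chebS (a + n) x = chebS a x * chebT n x + chebT a x * chebS n x"
    "chebT (Suc (a + n)) x = chebT a x * chebT (Suc n) x - (1 - x\<^sup>2) * chebS a x * chebS (Suc n) x"
    "chebS (Suc (a + n)) x = chebS a x * chebT (Suc n) x + chebT a x * chebS (Suc n) x" by auto
  show ?case
    unfolding e chebT.simps(3)[of "a + n"] chebS.simps(3)[of "a + n"] IH chebT.simps(3)[of n] chebS.simps(3)[of n]
    by (simp add: algebra_simps)
qed simp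

lemma chebS_double: "chebS (2 * n) x = 2 * chebS n x * chebT n x"
  unfolding mult_2 using chebT_chebS_add[of n n x] by (simp add: algebra_simps)

lemma chebT_double: "chebT (2 * n) x = 2 * chebT n x ^ 2 - 1"
proof -
  have "chebT (2 * n) x = chebT n x ^ 2 - (1 - x\<^sup>2) * chebS n x ^ 2"
    unfolding mult_2 using chebT_chebS_add[of n n x] by (simp add: power2_eq_square algebra_simps)
  also have "\<dots> = 2 * chebT n x ^ 2 - 1"
    using chebT_chebS_pell[of n x] by (simp add: algebra_simps)
  finally show ?thesis .
qed

lemma chebT_odd_minus_id: "chebT (2 * a + 1) x - x = 2 * (x\<^sup>2 - 1) * chebS (Suc a) x * chebS a x"
proof -
  define P where "P = chebT (Suc a) x * chebT a x"
  define Q where "Q = (1 - x\<^sup>2) * chebS (Suc a) x * chebS a x"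
  have "P + Q = x * (chebT a x ^ 2 + (1 - x\<^sup>2) * chebS a x ^ 2)"
    unfolding P_def Q_def chebT_Suc[of a] chebS_Suc[of a] by (simp add: algebra_simps power2_eq_square)
  then have x: "x = P + Q" by (simp add: chebT_chebS_pell)
  have "chebT (2 * a + 1) x = P - Q"
    using chebT_chebS_add[of "Suc a" a x] unfolding P_def Q_def by (simp add: mult_2)
  then have "chebT (2 * a + 1) x - x = - 2 * Q" by (simp add: x)
  then show ?thesis unfolding Q_def by (simp add: algebra_simps)
qed

lemma two_chebT_eq_chebS_diff: "2 * chebT (Suc n) x = chebS (Suc (Suc n)) x - chebS n x"
proof (induction n rule: induct_nat_012)
  case (ge2 n)
  have "2 * chebT (Suc (Suc (Suc n))) x = 2 * x * (2 * chebT (Suc (Suc n)) x) - 2 * chebT (Suc n) x"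
    by (simp only: chebT.simps(3)[of "Suc n"]) (simp add: algebra_simps)
  also have "\<dots> = (2 * x * chebS (Suc (Suc (Suc n))) x - chebS (Suc (Suc n)) x)
      - (2 * x * chebS (Suc n) x - chebS n x)"
    unfolding ge2 by (simp add: algebra_simps)
  finally show ?case by (simp only: chebS.simps(3))
qed (simp_all add: algebra_simps)

section \<open>The explicit formula\<close>

text \<open>The summands of \<open>U\<^sub>m(y/2) = \<Sum>\<^sub>k (-1)\<^sup>k C(m-k, k) y\<^sup>m\<^sup>-\<^sup>2\<^sup>k\<close>.\<close>

definition cheb_term :: "nat \<Rightarrow> 'a::comm_ring_1 \<Rightarrow> nat \<Rightarrow> 'a" where
  "cheb_term m y k = (-1) ^ k * of_nat ((m - k) choose k) * y ^ (m - 2 * k)"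

lemma cheb_term_eq_0: "m < 2 * k \<Longrightarrow> cheb_term m y k = 0"
  unfolding cheb_term_def by (simp add: binomial_eq_0)

lemma sum_cheb_term_extend: "m \<le> N \<Longrightarrow> (\<Sum>k\<le>m. cheb_term m y k) = (\<Sum>k\<le>N. cheb_term m y k)"
  by (rule sum.mono_neutral_left) (auto simp: cheb_term_eq_0)

lemma cheb_term_Suc_Suc:
  "cheb_term (Suc (Suc n)) y (Suc k) = y * cheb_term (Suc n) y (Suc k) - cheb_term n y k"
proof (cases "2 * k + 1 \<le> n")
  case True
  then have e: "Suc (Suc n) - Suc k = Suc (n - k)" "Suc n - Suc k = n - k"
    "Suc (Suc n) - 2 * Suc k = n - 2 * k" "y ^ (n - 2 * k) = y * y ^ (Suc n - 2 * Suc k)"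
    by (auto simp flip: power_Suc simp: Suc_diff_le Suc_diff_Suc[symmetric])
  show ?thesis unfolding cheb_term_def e binomial_Suc_Suc by (simp add: algebra_simps)
next
  case False
  then consider "n = 2 * k" | "n < 2 * k" by linarith
  then show ?thesis
  proof cases
    case 1
    then have e: "Suc (Suc n) - Suc k = Suc k" "Suc n - Suc k = k" "n - k = k"
      "Suc (Suc n) - 2 * Suc k = 0" "n - 2 * k = 0" by auto
    show ?thesis unfolding cheb_term_def e by (simp add: binomial_eq_0)
  next
    case 2
    then have z: "Suc (Suc n) - Suc k choose Suc k = 0" "Suc n - Suc k choose Suc k = 0" "n - k choose k = 0"
      by (auto simp: binomial_eq_0)
    show ?thesis unfolding cheb_term_def z by simp
  qed
qed

lemma sum_cheb_term_Suc_Suc: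
  "(\<Sum>k\<le>Suc (Suc n). cheb_term (Suc (Suc n)) y k)
    = y * (\<Sum>k\<le>Suc n. cheb_term (Suc n) y k) - (\<Sum>k\<le>n. cheb_term n y k)"
proof -
  have t0: "cheb_term (Suc (Suc n)) y 0 = y * cheb_term (Suc n) y 0"
    by (simp add: cheb_term_def)
  have "(\<Sum>k\<le>Suc (Suc n). cheb_term (Suc (Suc n)) y k)
      = cheb_term (Suc (Suc n)) y 0 + (\<Sum>k\<le>Suc n. cheb_term (Suc (Suc n)) y (Suc k))"
    by (rule sum.atMost_Suc_shift)
  also have "\<dots> = y * (cheb_term (Suc n) y 0 + (\<Sum>k\<le>Suc n. cheb_term (Suc n) y (Suc k)))
      - (\<Sum>k\<le>Suc n. cheb_term n y k)"
    by (simp only: t0 cheb_term_Suc_Suc sum_subtractf sum_distrib_left distrib_left add_diff_eq)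
  also have "(\<Sum>k\<le>Suc n. cheb_term (Suc n) y (Suc k)) = (\<Sum>k\<le>n. cheb_term (Suc n) y (Suc k))"
    by (simp add: cheb_term_eq_0)
  also have "cheb_term (Suc n) y 0 + (\<Sum>k\<le>n. cheb_term (Suc n) y (Suc k)) = (\<Sum>k\<le>Suc n. cheb_term (Suc n) y k)"
    by (rule sum.atMost_Suc_shift[symmetric])
  also have "(\<Sum>k\<le>Suc n. cheb_term n y k) = (\<Sum>k\<le>n. cheb_term n y k)"
    by (rule sum_cheb_term_extend[symmetric]) simp
  finally show ?thesis .
qed

lemma chebS_explicit: "chebS (Suc m) x = (\<Sum>k\<le>m. cheb_term m (2 * x) k)"
proof (induction m rule: induct_nat_012)
  case (ge2 n)
  then show ?case by (simp only: chebS.simps(3)[of "Suc n"] sum_cheb_term_Suc_Suc mult.assoc)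
qed (simp_all add: cheb_term_def)

lemma sum_cheb_term_half: "m div 2 \<le> N \<Longrightarrow> (\<Sum>k\<le>N. cheb_term m y k) = (\<Sum>k\<le>m div 2. cheb_term m y k)"
proof (rule sum.mono_neutral_right)
  show "\<forall>i\<in>{..N} - {..m div 2}. cheb_term m y i = 0"
    by (auto intro!: cheb_term_eq_0)
qed auto

lemma binomial_ratio_split:
  assumes "2 * k \<le> m" "2 \<le> m"
  shows "real m / real (m - k) * real ((m - k) choose k)
         = real ((m - k) choose k) + (if k = 0 then 0 else real ((m - k - 1) choose (k - 1)))"
proof (cases "k = 0")
  case False
  have "k * ((m - k) choose k) = (m - k) * ((m - k - 1) choose (k - 1))"
    using times_binomial_minus1_eq[of k "m - k"] False by simp
  then have h: "real k * real ((m - k) choose k) = real (m - k) * real ((m - k - 1) choose (k - 1))"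
    by (metis of_nat_mult)
  have m: "real m = real (m - k) + real k" using assms by simp
  have "real m * real ((m - k) choose k)
      = real (m - k) * (real ((m - k) choose k) + real ((m - k - 1) choose (k - 1)))"
    unfolding m distrib_right h by (simp add: distrib_left)
  moreover have "real (m - k) \<noteq> 0" using assms False by auto
  ultimately show ?thesis using False by (simp add: nonzero_divide_eq_eq mult.commute)
qed (use assms in simp)

lemma cheb_summand_eq:
  assumes k: "2 * k \<le> m" and m: "2 \<le> m"
  shows "(-1) ^ k * (real m / real (m - k)) * real ((m - k) choose k)
           * 2 powr (real m - 2 * real k - 1) * x ^ (m - 2 * k)
         = (cheb_term m (2 * x) k - (if k = 0 then 0 else cheb_term (m - 2) (2 * x) (k - 1))) / 2"
proof -
  define B where "B = (if k = 0 then 0 else real ((m - k - 1) choose (k - 1)))"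
  have e: "real m - 2 * real k - 1 = real (m - 2 * k) - 1" using k by (simp add: of_nat_diff)
  have "(2::real) powr (real (m - 2 * k) - 1) = 2 ^ (m - 2 * k) / 2"
    by (simp add: powr_diff powr_realpow)
  then have pw: "2 powr (real m - 2 * real k - 1) * x ^ (m - 2 * k) = (2 * x) ^ (m - 2 * k) / 2"
    unfolding e by (simp add: power_mult_distrib)
  have shifted: "(if k = 0 then 0 else cheb_term (m - 2) (2 * x) (k - 1)) = - ((-1) ^ k * B * (2 * x) ^ (m - 2 * k))"
  proof (cases k)
    case (Suc j)
    then have "m - 2 - j = m - k - 1" "m - 2 - 2 * j = m - 2 * k" using k by auto
    then show ?thesis unfolding B_def cheb_term_def using Suc by simp
  qed (simp add: B_def)
  have "(-1) ^ k * (real m / real (m - k)) * real ((m - k) choose k)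
           * 2 powr (real m - 2 * real k - 1) * x ^ (m - 2 * k)
      = (-1) ^ k * (real m / real (m - k) * real ((m - k) choose k))
           * (2 powr (real m - 2 * real k - 1) * x ^ (m - 2 * k))"
    by (simp only: mult.assoc)
  also have "\<dots> = (-1) ^ k * (real ((m - k) choose k) + B) * ((2 * x) ^ (m - 2 * k) / 2)"
    unfolding B_def by (simp only: binomial_ratio_split[OF k m] pw)
  also have "\<dots> = (cheb_term m (2 * x) k - (if k = 0 then 0 else cheb_term (m - 2) (2 * x) (k - 1))) / 2"
    unfolding shifted by (simp add: cheb_term_def algebra_simps)
  finally show ?thesis .
qed

lemma cheb_eq_chebT: "2 \<le> m \<Longrightarrow> cheb m x = chebT m x"
proof -
  assume m: "2 \<le> m"
  then obtain n where n: "m = Suc (Suc n)" by (metis add_2_eq_Suc le_Suc_ex)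
  have "cheb m x = (\<Sum>k\<le>m div 2.
      (cheb_term m (2 * x) k - (if k = 0 then 0 else cheb_term (m - 2) (2 * x) (k - 1))) / 2)"
    unfolding cheb_def atLeast0AtMost
  proof (rule sum.cong[OF refl])
    fix k assume "k \<in> {..m div 2}"
    then have "2 * k \<le> m" by auto
    then show "(-1) ^ k * (real m / real (m - k)) * real ((m - k) choose k)
           * 2 powr (real m - 2 * real k - 1) * x ^ (m - 2 * k)
         = (cheb_term m (2 * x) k - (if k = 0 then 0 else cheb_term (m - 2) (2 * x) (k - 1))) / 2"
      by (rule cheb_summand_eq[OF _ m])
  qed
  also have "\<dots> = ((\<Sum>k\<le>m div 2. cheb_term m (2 * x) k)
      - (\<Sum>k\<le>m div 2. if k = 0 then 0 else cheb_term (m - 2) (2 * x) (k - 1))) / 2"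
    by (simp only: diff_divide_distrib sum_divide_distrib sum_subtractf)
  also have "(\<Sum>k\<le>m div 2. cheb_term m (2 * x) k) = chebS (Suc m) x"
    by (metis chebS_explicit sum_cheb_term_half div_le_dividend)
  also have "(\<Sum>k\<le>m div 2. if k = 0 then 0 else cheb_term (m - 2) (2 * x) (k - 1))
      = (\<Sum>k\<le>n div 2. cheb_term n (2 * x) k)"
    using n by (simp add: sum.atMost_Suc_shift del: sum.atMost_Suc)
  also have "\<dots> = chebS (Suc n) x"
    by (metis chebS_explicit sum_cheb_term_half div_le_dividend)
  also have "chebS (Suc m) x - chebS (Suc n) x = 2 * chebT m x"
    using two_chebT_eq_chebS_diff[of "Suc n" x] n by simp
  finally show ?thesis by simp
qed

lemma chebT_of_int: "chebT m (of_int a) = of_int (chebT m a)"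
  by (induction m rule: induct_nat_012) simp_all

lemma cheb_int_eq_chebT: "2 \<le> m \<Longrightarrow> cheb_int m a = chebT m a"
  unfolding cheb_int_def using cheb_eq_chebT[of m "real_of_int a"] chebT_of_int[of m a, where 'a=real]
  by simp

section \<open>Integer Chebyshev polynomials and 2-adic valuations\<close>

lemma dvd_mult_diff: "h dvd a - a' \<Longrightarrow> h dvd b - b' \<Longrightarrow> h dvd a * b - a' * (b'::'a::comm_ring_1)"
proof -
  assume "h dvd a - a'" "h dvd b - b'"
  moreover have "a * b - a' * b' = a * (b - b') + b' * (a - a')" by (simp add: algebra_simps)
  ultimately show ?thesis by simp
qed

lemma chebT_diff_dvd: "x - y dvd chebT k x - chebT k (y::int)"
proof (induction k rule: induct_nat_012)
  case (ge2 n)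
  have "chebT (Suc (Suc n)) x - chebT (Suc (Suc n)) y
      = 2 * x * (chebT (Suc n) x - chebT (Suc n) y) + (x - y) * (2 * chebT (Suc n) y) - (chebT n x - chebT n y)"
    by (simp add: algebra_simps)
  then show ?case using ge2 by (metis dvd_add dvd_diff dvd_mult dvd_triv_left)
qed simp_all

lemma chebS_diff_dvd: "x - y dvd chebS k x - chebS k (y::int)"
proof (induction k rule: induct_nat_012)
  case (ge2 n)
  have "chebS (Suc (Suc n)) x - chebS (Suc (Suc n)) y
      = 2 * x * (chebS (Suc n) x - chebS (Suc n) y) + (x - y) * (2 * chebS (Suc n) y) - (chebS n x - chebS n y)"
    by (simp add: algebra_simps)
  then show ?case using ge2 by (metis dvd_add dvd_diff dvd_mult dvd_triv_left)
qed simp_all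

lemma chebT_mod: "chebT k (x mod M) mod M = chebT k (x::int) mod M"
proof -
  have "M dvd x mod M - x" by (simp add: mod_eq_dvd_iff[symmetric])
  then have "M dvd chebT k (x mod M) - chebT k x" using chebT_diff_dvd dvd_trans by blast
  then show ?thesis by (simp add: mod_eq_dvd_iff)
qed

lemma chebT_one: "chebT k (1::int) = 1"
  by (induction k rule: induct_nat_012) auto

lemma chebT_minus_one: "chebT k (-1::int) = (-1) ^ k"
  by (induction k rule: induct_nat_012) auto

lemma odd_chebT: "odd x \<Longrightarrow> odd (chebT k (x::int))"
  by (induction k rule: induct_nat_012) auto

lemma odd_chebS_iff: "odd (chebS k (x::int)) \<longleftrightarrow> odd k"
  by (induction k rule: induct_nat_012) auto

lemma chebT_even_arg:
  assumes "even (x::int)"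
  shows "(even k \<longrightarrow> odd (chebT k x)) \<and> (odd k \<longrightarrow> (\<exists>w. odd w \<and> chebT k x = x * w))"
proof (induction k rule: induct_nat_012)
  case 1
  show ?case by (auto intro: exI[of _ 1])
next
  case (ge2 n)
  show ?case
  proof (intro conjI impI)
    assume "even (Suc (Suc n))"
    then show "odd (chebT (Suc (Suc n)) x)" using ge2 by auto
  next
    assume "odd (Suc (Suc n))"
    then obtain w where "odd w" "chebT n x = x * w" using ge2 by auto
    then show "\<exists>w. odd w \<and> chebT (Suc (Suc n)) x = x * w"
      using assms by (intro exI[of _ "2 * chebT (Suc n) x - w"]) (auto simp: algebra_simps)
  qed
qed simp

lemma chebT_zero: "odd k \<Longrightarrow> chebT k (0::int) = 0"
  using chebT_even_arg[of 0 k] by auto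

definition exact_pow2 :: "nat \<Rightarrow> int \<Rightarrow> bool" where
  "exact_pow2 e z \<longleftrightarrow> (\<exists>u. odd u \<and> z = 2 ^ e * u)"

lemma exact_pow2_mult: "exact_pow2 a z \<Longrightarrow> exact_pow2 b w \<Longrightarrow> exact_pow2 (a + b) (z * w)"
proof -
  assume "exact_pow2 a z" "exact_pow2 b w"
  then obtain u v where "odd u" "z = 2 ^ a * u" "odd v" "w = 2 ^ b * v" unfolding exact_pow2_def by auto
  then show ?thesis unfolding exact_pow2_def by (intro exI[of _ "u * v"]) (simp add: power_add algebra_simps)
qed

lemma exact_pow2_0_iff: "exact_pow2 0 z \<longleftrightarrow> odd z"
  unfolding exact_pow2_def by simp

lemma exact_pow2_two: "exact_pow2 1 2"
  unfolding exact_pow2_def by (auto intro: exI[of _ 1])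

lemma exact_pow2_dvd_diff: "exact_pow2 e z \<Longrightarrow> 2 ^ (e + 1) dvd z - 2 ^ e"
proof -
  assume "exact_pow2 e z"
  then obtain v where "z = 2 ^ e * (2 * v + 1)" unfolding exact_pow2_def by (metis oddE)
  then have "z - 2 ^ e = 2 ^ (e + 1) * v" by (simp add: algebra_simps)
  then show ?thesis by simp
qed

lemma exact_pow2_chebS_odd_arg: "odd x \<Longrightarrow> odd j \<Longrightarrow> exact_pow2 e (chebS (2 ^ e * j) (x::int))"
proof (induction e)
  case (Suc e)
  have "exact_pow2 (1 + e + 0) (2 * chebS (2 ^ e * j) x * chebT (2 ^ e * j) x)"
    using Suc odd_chebT by (intro exact_pow2_mult exact_pow2_two) (auto simp: exact_pow2_0_iff)
  then show ?case by (simp add: chebS_double mult.assoc)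
qed (simp add: exact_pow2_0_iff odd_chebS_iff)

lemma exact_pow2_chebS_even_arg:
  assumes x: "exact_pow2 n (x::int)" and n: "1 \<le> n" and j: "odd j" and e: "1 \<le> e"
  shows "exact_pow2 (n + e) (chebS (2 ^ e * j) x)"
  using e
proof (induction e rule: dec_induct)
  case base
  have "even x" using x n unfolding exact_pow2_def by auto
  then obtain w where w: "odd w" "chebT j x = x * w" using chebT_even_arg[of x j] j by auto
  have "exact_pow2 (1 + 0 + (n + 0)) (2 * chebS j x * (x * w))"
    using j w by (intro exact_pow2_mult exact_pow2_two x) (auto simp: exact_pow2_0_iff odd_chebS_iff)
  then show ?case by (simp add: chebS_double w(2) mult.assoc)
next
  case (step e)
  have "even x" using x n unfolding exact_pow2_def by auto
  then have "odd (chebT (2 ^ e * j) x)" using chebT_even_arg[of x "2 ^ e * j"] step(1) by auto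
  then have "exact_pow2 (1 + (n + e) + 0) (2 * chebS (2 ^ e * j) x * chebT (2 ^ e * j) x)"
    using step by (intro exact_pow2_mult exact_pow2_two) (auto simp: exact_pow2_0_iff)
  then show ?case by (simp add: chebS_double mult.assoc)
qed

lemma exact_pow2_chebT_odd_minus_id:
  fixes x :: int
  assumes q: "odd q" and s: "2 \<le> s" and a: "a = 2 ^ (s - 1) * q \<or> Suc a = 2 ^ (s - 1) * q"
  shows exact_pow2_chebT_odd_minus_id_even_arg:
      "exact_pow2 n x \<Longrightarrow> 1 \<le> n \<Longrightarrow> exact_pow2 (n + s) (chebT (2 * a + 1) x - x)"
    and exact_pow2_chebT_odd_minus_id_odd_arg:
      "odd x \<Longrightarrow> exact_pow2 (n + 1) (x\<^sup>2 - 1) \<Longrightarrow> exact_pow2 (n + s + 1) (chebT (2 * a + 1) x - x)"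
proof -
  have even_b: "even (2 ^ (s - 1) * q :: nat)" using s by simp
  text \<open>Of the two consecutive indices \<open>a\<close>, \<open>a + 1\<close>, one is \<open>b = 2\<^sup>s\<^sup>-\<^sup>1 q\<close> and the other, \<open>c\<close>, is odd.\<close>
  obtain b c where b: "b = 2 ^ (s - 1) * q" and c: "odd c"
    and bc: "chebT (2 * a + 1) x - x = 2 * (x\<^sup>2 - 1) * (chebS b x * chebS c x)"
  proof (cases "a = 2 ^ (s - 1) * q")
    case True
    then show ?thesis using that[of a "Suc a"] even_b chebT_odd_minus_id[of a x] by (simp add: algebra_simps)
  next
    case False
    then have "Suc a = 2 ^ (s - 1) * q" using a by simp
    moreover from this have "odd a" using even_b by (metis even_Suc)
    ultimately show ?thesis using that[of "Suc a" a] chebT_odd_minus_id[of a x]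
      by (simp add: algebra_simps)
  qed
  have Sc: "exact_pow2 0 (chebS c x)" using c by (simp add: exact_pow2_0_iff odd_chebS_iff)
  show "exact_pow2 (n + s) (chebT (2 * a + 1) x - x)" if x: "exact_pow2 n x" and n: "1 \<le> n"
  proof -
    have "even x" using x n unfolding exact_pow2_def by auto
    then have "exact_pow2 0 (x\<^sup>2 - 1)" by (simp add: exact_pow2_0_iff)
    moreover have "exact_pow2 (n + (s - 1)) (chebS b x)"
      unfolding b by (rule exact_pow2_chebS_even_arg[OF x n q]) (use s in simp)
    ultimately have "exact_pow2 (1 + 0 + (n + (s - 1) + 0)) (2 * (x\<^sup>2 - 1) * (chebS b x * chebS c x))"
      by (intro exact_pow2_mult exact_pow2_two Sc)
    then show ?thesis unfolding bc using s by simp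
  qed
  show "exact_pow2 (n + s + 1) (chebT (2 * a + 1) x - x)" if x: "odd x" and x2: "exact_pow2 (n + 1) (x\<^sup>2 - 1)"
  proof -
    have "exact_pow2 (s - 1) (chebS b x)" unfolding b by (rule exact_pow2_chebS_odd_arg[OF x q])
    then have "exact_pow2 (1 + (n + 1) + (s - 1 + 0)) (2 * (x\<^sup>2 - 1) * (chebS b x * chebS c x))"
      by (intro exact_pow2_mult exact_pow2_two x2 Sc)
    then show ?thesis unfolding bc using s by simp
  qed
qed

lemma chebS_double_diff_dvd: "2 * (x - y) dvd chebS (2 * j) x - chebS (2 * j) (y::int)"
proof -
  have "x - y dvd chebS j x * chebT j x - chebS j y * chebT j y"
    by (intro dvd_mult_diff chebS_diff_dvd chebT_diff_dvd)
  then have "2 * (x - y) dvd 2 * (chebS j x * chebT j x - chebS j y * chebT j y)"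
    by (rule mult_dvd_mono[OF dvd_refl])
  then show ?thesis unfolding chebS_double by (simp add: algebra_simps)
qed

lemma chebS_consecutive_prod_diff_dvd:
  "2 * (x - y) dvd chebS (Suc a) x * chebS a x - chebS (Suc a) y * chebS a (y::int)"
proof -
  text \<open>One of the two indices is even, and \<open>chebS\<close> at an even index is twice a polynomial.\<close>
  have even_factor: "2 * (x - y) dvd chebS (2 * j) x * chebS i x - chebS (2 * j) y * chebS i y" for i j
  proof -
    have "2 * (x - y) dvd chebS (2 * j) x * (chebS i x - chebS i y)"
      unfolding chebS_double using chebS_diff_dvd[of x y i]
      by (metis mult.assoc mult.left_commute mult_dvd_mono dvd_triv_left)
    moreover have "2 * (x - y) dvd chebS i y * (chebS (2 * j) x - chebS (2 * j) y)"
      using chebS_double_diff_dvd by (rule dvd_mult)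
    moreover have "chebS (2 * j) x * chebS i x - chebS (2 * j) y * chebS i y
        = chebS (2 * j) x * (chebS i x - chebS i y) + chebS i y * (chebS (2 * j) x - chebS (2 * j) y)"
      by (simp add: algebra_simps)
    ultimately show ?thesis by simp
  qed
  show ?thesis
  proof (cases "even a")
    case True
    then obtain j where "a = 2 * j" by blast
    then show ?thesis using even_factor[of j "Suc a"] by (simp add: mult.commute)
  next
    case False
    then obtain j where "Suc a = 2 * j" by (metis even_Suc evenE)
    then show ?thesis using even_factor[of j a] by simp
  qed
qed

lemma chebT_odd_increment:
  assumes N: "1 \<le> N"
  shows "(2::int) ^ (N + 2) dvd chebT (2 * a + 1) (x + 2 ^ N * t) - (chebT (2 * a + 1) x + 2 ^ N * t)"
proof -
  obtain M where M: "N = Suc M" using N by (cases N) auto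
  define u :: int where "u = 2 ^ M * t"
  define P where "P y = chebS (Suc a) y * chebS a y" for y :: int
  have T: "chebT (2 * a + 1) y = y + 2 * (y\<^sup>2 - 1) * P y" for y
    using chebT_odd_minus_id[of a y] unfolding P_def by (simp add: algebra_simps)
  obtain r where r: "P (x + 2 * u) - P x = 2 * (2 * u) * r"
    using chebS_consecutive_prod_diff_dvd[of "x + 2 * u" x a] unfolding P_def by auto
  have "chebT (2 * a + 1) (x + 2 * u) - (chebT (2 * a + 1) x + 2 * u)
      = 8 * u * (x + u) * P (x + 2 * u) + 2 * (x\<^sup>2 - 1) * (P (x + 2 * u) - P x)"
    unfolding T by (simp add: algebra_simps power2_eq_square)
  also have "\<dots> = 8 * u * ((x + u) * P (x + 2 * u) + (x\<^sup>2 - 1) * r)"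
    unfolding r by (simp add: algebra_simps)
  finally have e: "chebT (2 * a + 1) (x + 2 * u) - (chebT (2 * a + 1) x + 2 * u)
      = 8 * u * ((x + u) * P (x + 2 * u) + (x\<^sup>2 - 1) * r)" .
  have hu: "2 ^ N * t = 2 * u" unfolding u_def M by simp
  have "(2::int) ^ (N + 2) dvd 8 * u" unfolding u_def M by simp
  then show ?thesis unfolding hu e by (rule dvd_mult2)
qed

lemma chebT_even_near_one: "(2::int) ^ g dvd y - 1 \<Longrightarrow> 2 ^ (g + 1) dvd chebT (2 * k) y - 1"
proof -
  assume "(2::int) ^ g dvd y - 1"
  then have "2 ^ g dvd chebT k y - 1" using chebT_diff_dvd[of y 1 k] dvd_trans by (fastforce simp: chebT_one)
  then have "2 * 2 ^ g dvd 2 * ((chebT k y - 1) * (chebT k y + 1))"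
    by (intro mult_dvd_mono) simp_all
  moreover have "chebT (2 * k) y - 1 = 2 * ((chebT k y - 1) * (chebT k y + 1))"
    unfolding chebT_double by (simp add: algebra_simps power2_eq_square)
  ultimately show ?thesis by simp
qed

lemma s_of_greatest:
  assumes m: "odd m" "2 \<le> m"
  shows "2 \<le> s_of m" and "2 ^ s_of m dvd m + 1 \<or> 2 ^ s_of m dvd m - 1"
    and "\<not> 2 ^ Suc (s_of m) dvd m + 1" and "\<not> 2 ^ Suc (s_of m) dvd m - 1"
proof -
  define P where "P n \<longleftrightarrow> n \<ge> 2 \<and> (2 ^ n dvd m + 1 \<or> 2 ^ n dvd m - 1)" for n
  have s: "s_of m = (GREATEST n. P n)" unfolding s_of_def P_def ..
  have "4 dvd m + 1 \<or> 4 dvd m - 1" using m by presburger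
  then have P2: "P 2" unfolding P_def by simp
  have bound: "n \<le> m" if "P n" for n
  proof -
    have "2 ^ n \<le> m + 1"
      using that m dvd_imp_le[of "2 ^ n" "m + 1"] dvd_imp_le[of "2 ^ n" "m - 1"] unfolding P_def by auto
    moreover have "n < 2 ^ n" by (rule less_exp)
    ultimately show ?thesis by linarith
  qed
  have "P (s_of m)" unfolding s by (rule GreatestI_nat[where P=P, OF P2]) (use bound in blast)
  then show "2 \<le> s_of m" and "2 ^ s_of m dvd m + 1 \<or> 2 ^ s_of m dvd m - 1" unfolding P_def by auto
  have "\<not> P (Suc (s_of m))"
    using Greatest_le_nat[of P "Suc (s_of m)" m] bound unfolding s by auto
  then show "\<not> 2 ^ Suc (s_of m) dvd m + 1" and "\<not> 2 ^ Suc (s_of m) dvd m - 1"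
    using \<open>2 \<le> s_of m\<close> unfolding P_def by auto
qed

lemma odd_decomp_s_of:
  assumes m: "odd m" "2 \<le> m"
  obtains a q where "m = 2 * a + 1" "odd q" "a = 2 ^ (s_of m - 1) * q \<or> Suc a = 2 ^ (s_of m - 1) * q"
proof -
  define s where "s = s_of m"
  obtain a where a: "m = 2 * a + 1" using m by (metis oddE)
  have s2: "2 \<le> s" and pow: "2 ^ s dvd m + 1 \<or> 2 ^ s dvd m - 1"
    and max: "\<not> 2 ^ Suc s dvd m + 1" "\<not> 2 ^ Suc s dvd m - 1"
    using s_of_greatest[OF m] unfolding s_def by auto
  have half: "2 ^ s * q = 2 * (2 ^ (s - 1) * q)" for q :: nat
    using s2 by (cases s) auto
  from pow obtain q where q: "m + 1 = 2 ^ s * q \<or> m - 1 = 2 ^ s * q" and "odd q"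
  proof
    assume "2 ^ s dvd m + 1"
    then obtain q where "m + 1 = 2 ^ s * q" by blast
    moreover from this have "odd q" using max(1) by auto
    ultimately show ?thesis using that by blast
  next
    assume "2 ^ s dvd m - 1"
    then obtain q where "m - 1 = 2 ^ s * q" by blast
    moreover from this have "odd q" using max(2) by auto
    ultimately show ?thesis using that by blast
  qed
  moreover from q have "a = 2 ^ (s - 1) * q \<or> Suc a = 2 ^ (s - 1) * q"
    unfolding half a by auto
  ultimately show ?thesis using that a unfolding s_def by blast
qed

section \<open>Odometer maps on residue classes\<close>

text \<open>The integer shadow of a map of \<open>\<int>\<^sub>2\<close> that is 1-Lipschitz with 2-adic derivative \<open>\<equiv> 1 (mod 4)\<close>.\<close>

definition preserves_increments_mod4 :: "(int \<Rightarrow> int) \<Rightarrow> bool" where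
  "preserves_increments_mod4 f \<longleftrightarrow>
     (\<forall>x t N. 1 \<le> N \<longrightarrow> (2::int) ^ (N + 2) dvd f (x + 2 ^ N * t) - (f x + 2 ^ N * t))"

lemma preserves_increments_mod4E:
  assumes "preserves_increments_mod4 f" "1 \<le> N"
  obtains r where "f (x + 2 ^ N * t) = f x + 2 ^ N * (t + 4 * r)"
proof -
  obtain r where "f (x + 2 ^ N * t) - (f x + 2 ^ N * t) = 2 ^ (N + 2) * r"
    using assms unfolding preserves_increments_mod4_def by (meson dvdE)
  then have "f (x + 2 ^ N * t) = f x + 2 ^ N * (t + 4 * r)" by (simp add: power_add algebra_simps)
  then show ?thesis by (rule that)
qed

lemma preserves_increments_mod4_comp:
  assumes f: "preserves_increments_mod4 f" and g: "preserves_increments_mod4 g"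
  shows "preserves_increments_mod4 (g \<circ> f)"
  unfolding preserves_increments_mod4_def
proof (intro allI impI)
  fix x t :: int and N :: nat
  assume N: "1 \<le> N"
  obtain r where r: "f (x + 2 ^ N * t) = f x + 2 ^ N * (t + 4 * r)"
    using preserves_increments_mod4E[OF f N] .
  obtain r' where "g (f x + 2 ^ N * (t + 4 * r)) = g (f x) + 2 ^ N * ((t + 4 * r) + 4 * r')"
    using preserves_increments_mod4E[OF g N] .
  then have "(g \<circ> f) (x + 2 ^ N * t) - ((g \<circ> f) x + 2 ^ N * t) = 2 ^ (N + 2) * (r + r')"
    using r by (simp add: power_add algebra_simps)
  then show "(2::int) ^ (N + 2) dvd (g \<circ> f) (x + 2 ^ N * t) - ((g \<circ> f) x + 2 ^ N * t)" by simp
qed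

lemma preserves_increments_mod4_funpow:
  "preserves_increments_mod4 f \<Longrightarrow> preserves_increments_mod4 (f ^^ k)"
proof (induction k)
  case 0
  then show ?case by (simp add: preserves_increments_mod4_def)
next
  case (Suc k)
  then show ?case using preserves_increments_mod4_comp[of "f ^^ k" f] by (simp add: o_def)
qed

lemma preserves_increments_mod4_twice:
  assumes g: "preserves_increments_mod4 g" and L: "1 \<le> L"
    and h: "(2::int) ^ (L + 1) dvd g x - (x + 2 ^ L)"
  shows "(2::int) ^ (L + 2) dvd g (g x) - (x + 2 ^ (L + 1))"
proof -
  obtain r where "g x - (x + 2 ^ L) = 2 ^ (L + 1) * r" using h by (meson dvdE)
  then have gx: "g x = x + 2 ^ L * (1 + 2 * r)" by (simp add: power_add algebra_simps)
  obtain r' where "g (x + 2 ^ L * (1 + 2 * r)) = g x + 2 ^ L * ((1 + 2 * r) + 4 * r')"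
    using preserves_increments_mod4E[OF g L] .
  then have "g (g x) - (x + 2 ^ (L + 1)) = 2 ^ (L + 2) * (r + r')"
    unfolding gx by (simp add: gx power_add algebra_simps)
  then show ?thesis by simp
qed

lemma chebT_odd_preserves_increments_mod4: "odd m \<Longrightarrow> preserves_increments_mod4 (chebT m)"
  unfolding preserves_increments_mod4_def by (metis chebT_odd_increment oddE)

text \<open>Modulo each \<open>2\<^sup>N\<close> such a map permutes the residues of the coset \<open>b + 2\<^sup>K\<int>\<close> in a single
  cycle, like the odometer \<open>x \<mapsto> x + 1\<close>.\<close>

locale coset_odometer =
  fixes f :: "int \<Rightarrow> int" and b :: int and K :: nat
  assumes increments: "preserves_increments_mod4 f"
    and level_pos: "1 \<le> K"
    and step: "\<And>x. 2 ^ K dvd x - b \<Longrightarrow> 2 ^ (K + 1) dvd f x - (x + 2 ^ K)"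
begin

lemma funpow_in_coset:
  assumes "2 ^ K dvd x - b"
  shows "2 ^ K dvd (f ^^ k) x - b"
proof (induction k)
  case (Suc k)
  have "(2::int) ^ K dvd 2 ^ (K + 1)" by (simp add: power_add)
  then have "(2::int) ^ K dvd f ((f ^^ k) x) - ((f ^^ k) x + 2 ^ K)"
    using step[OF Suc] dvd_trans by blast
  then have "2 ^ K dvd (f ((f ^^ k) x) - ((f ^^ k) x + 2 ^ K)) + 2 ^ K + ((f ^^ k) x - b)"
    using Suc by (intro dvd_add dvd_refl)
  then show ?case by simp
qed (use assms in simp)

lemma funpow_pow2_step:
  assumes z: "2 ^ K dvd z - b"
  shows "2 ^ (K + j + 1) dvd (f ^^ 2 ^ j) z - (z + 2 ^ (K + j))"
proof (induction j)
  case 0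
  then show ?case using step[OF z] by simp
next
  case (Suc j)
  have "f ^^ 2 ^ Suc j = (f ^^ 2 ^ j) \<circ> (f ^^ 2 ^ j)"
    by (simp add: funpow_add[symmetric] mult_2)
  moreover have "(2::int) ^ (K + j + 2) dvd (f ^^ 2 ^ j) ((f ^^ 2 ^ j) z) - (z + 2 ^ (K + j + 1))"
    using Suc level_pos by (intro preserves_increments_mod4_twice preserves_increments_mod4_funpow increments) simp_all
  ultimately show ?case by simp
qed

text \<open>If the orbit of \<open>x\<close> meets \<open>y\<close> modulo \<open>2\<^sup>N\<close> but misses it modulo \<open>2\<^sup>N\<^sup>+\<^sup>1\<close>, another
  \<open>2\<^sup>N\<^sup>-\<^sup>K\<close> steps fix the next binary digit.\<close>

lemma orbit_refine:
  assumes x: "2 ^ K dvd x - b" and y: "2 ^ K dvd y - b" and N: "K \<le> N"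
    and k: "2 ^ N dvd (f ^^ k) x - y"
  shows "\<exists>k'. 2 ^ Suc N dvd (f ^^ k') x - y"
proof -
  define z where "z = (f ^^ k) x"
  obtain u where u: "z - y = 2 ^ N * u" using k unfolding z_def by (meson dvdE)
  show ?thesis
  proof (cases "even u")
    case True
    then have "2 ^ Suc N dvd (f ^^ k) x - y" using u unfolding z_def by auto
    then show ?thesis by blast
  next
    case False
    then obtain v where v: "u = 2 * v + 1" by (metis oddE)
    have "2 ^ (K + (N - K) + 1) dvd (f ^^ 2 ^ (N - K)) z - (z + 2 ^ (K + (N - K)))"
      unfolding z_def by (rule funpow_pow2_step[OF funpow_in_coset[OF x]])
    then have "2 ^ Suc N dvd (f ^^ 2 ^ (N - K)) z - (z + 2 ^ N)" using N by simp
    moreover have "(f ^^ 2 ^ (N - K)) z - y = ((f ^^ 2 ^ (N - K)) z - (z + 2 ^ N)) + 2 ^ Suc N * (v + 1)"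
      using u v by (simp add: algebra_simps)
    ultimately have "2 ^ Suc N dvd (f ^^ 2 ^ (N - K)) z - y" by (metis dvd_add dvd_triv_left)
    then have "2 ^ Suc N dvd (f ^^ (2 ^ (N - K) + k)) x - y"
      unfolding z_def by (simp add: funpow_add)
    then show ?thesis by blast
  qed
qed

lemma orbit_hits_residue:
  assumes x: "2 ^ K dvd x - b" and y: "2 ^ K dvd y - b"
  shows "\<exists>k. 2 ^ N dvd (f ^^ k) x - y"
proof (induction N)
  case (Suc N)
  show ?case
  proof (cases "K \<le> N")
    case True
    then show ?thesis using Suc orbit_refine[OF x y] by blast
  next
    case False
    have "2 ^ K dvd (x - b) - (y - b)" using x y by (rule dvd_diff)
    moreover have "(2::int) ^ Suc N dvd 2 ^ K" using False by (intro le_imp_power_dvd) simp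
    ultimately show ?thesis by (intro exI[of _ 0]) (auto intro: dvd_trans)
  qed
qed simp

end

section \<open>The 2-adic integers\<close>

lemma Z2_bounds: "x \<in> Z2 \<Longrightarrow> 0 \<le> x n \<and> x n < 2 ^ n"
  unfolding Z2_def by blast

lemma Z2_mod_self: "x \<in> Z2 \<Longrightarrow> x n mod 2 ^ n = x n"
  using Z2_bounds[of x n] by simp

lemma Z2_at_0: "x \<in> Z2 \<Longrightarrow> x 0 = 0"
  using Z2_bounds[of x 0] by simp

lemma Z2_mod:
  assumes x: "x \<in> Z2" and "M \<le> n"
  shows "x n mod 2 ^ M = x M"
  using assms(2)
proof (induction n rule: dec_induct)
  case (step n)
  have "x (Suc n) mod 2 ^ M = (x (Suc n) mod 2 ^ n) mod 2 ^ M"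
    using step(1) by (simp add: mod_mod_cancel le_imp_power_dvd)
  also have "\<dots> = x n mod 2 ^ M" using x unfolding Z2_def by simp
  finally show ?case using step by simp
qed (simp add: Z2_mod_self[OF x])

lemma z2_of_int_in_Z2: "z2_of_int c \<in> Z2"
  unfolding Z2_def z2_of_int_def by (simp add: mod_mod_cancel le_imp_power_dvd)

lemma Z2_agree_bounded:
  assumes x: "x \<in> Z2" and y: "y \<in> Z2" and ne: "x \<noteq> y"
  obtains M where "\<And>n. x n = y n \<Longrightarrow> n \<le> M"
proof -
  obtain M where M: "x M \<noteq> y M" using ne by blast
  have "n \<le> M" if "x n = y n" for n
  proof (rule ccontr)
    assume "\<not> n \<le> M"
    then have "x M = y M" using Z2_mod[OF x] Z2_mod[OF y] that by (metis nat_le_linear)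
    then show False using M by simp
  qed
  then show ?thesis by (rule that)
qed

lemma z2_dist_le:
  assumes x: "x \<in> Z2" and y: "y \<in> Z2" and N: "x N = y N"
  shows "z2_dist x y \<le> (1/2) ^ N"
proof (cases "x = y")
  case False
  obtain M where M: "\<And>n. x n = y n \<Longrightarrow> n \<le> M" using Z2_agree_bounded[OF x y False] by blast
  have "N \<le> (GREATEST n. x n = y n)"
    by (rule Greatest_le_nat[where P="\<lambda>n. x n = y n", OF N]) (use M in blast)
  then show ?thesis using False by (simp add: z2_dist_def power_decreasing)
qed (simp add: z2_dist_def)

lemma z2_dist_eq_pow:
  assumes x: "x \<in> Z2" and y: "y \<in> Z2" and ne: "x \<noteq> y"
  obtains g where "z2_dist x y = (1/2) ^ g" "x g = y g"
proof -
  obtain M where M: "\<And>n. x n = y n \<Longrightarrow> n \<le> M" using Z2_agree_bounded[OF x y ne] by blast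
  have "x (GREATEST n. x n = y n) = y (GREATEST n. x n = y n)"
    using Z2_at_0[OF x] Z2_at_0[OF y] by (intro GreatestI_nat[where P="\<lambda>n. x n = y n", of 0]) (use M in auto)
  then show ?thesis using ne that unfolding z2_dist_def by simp
qed

lemma exists_pow_half_less:
  assumes "(e::real) > 0"
  obtains N where "(1/2::real) ^ N < e" "K \<le> N"
proof -
  obtain N where N: "(1/2::real) ^ N < e" using real_arch_pow_inv[OF assms, of "1/2"] by auto
  have "(1/2::real) ^ max N K \<le> (1/2) ^ N" by (rule power_decreasing) auto
  then have "(1/2::real) ^ max N K < e" using N by linarith
  then show ?thesis using that[of "max N K"] by simp
qed

lemma z2_affine_apply: "z2_add (z2_of_int c) (z2_mul (z2_of_int d) z) n = (c + d * z n) mod 2 ^ n"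
  unfolding z2_add_def z2_mul_def z2_of_int_def by (simp add: mod_add_eq mod_mult_left_eq)

lemma coset2_subset: "coset2 c K \<subseteq> {x \<in> Z2. x K = c mod 2 ^ K}"
proof
  fix x assume "x \<in> coset2 c K"
  then obtain z where z: "z \<in> Z2" and xz: "x = z2_add (z2_of_int c) (z2_mul (z2_of_int (2 ^ K)) z)"
    unfolding coset2_def by blast
  have xn: "x n = (c + 2 ^ K * z n) mod 2 ^ n" for n unfolding xz z2_affine_apply ..
  have "x \<in> Z2" unfolding Z2_def
  proof (intro CollectI conjI allI)
    fix n
    show "0 \<le> x n" "x n < 2 ^ n" unfolding xn by auto
    have "x (Suc n) mod 2 ^ n = (c + 2 ^ K * z (Suc n)) mod 2 ^ n"
      unfolding xn by (simp add: mod_mod_cancel le_imp_power_dvd)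
    also have "\<dots> = (c + 2 ^ K * (z (Suc n) mod 2 ^ n)) mod 2 ^ n"
      by (metis mod_add_right_eq mod_mult_right_eq)
    also have "\<dots> = x n" unfolding xn using z unfolding Z2_def by simp
    finally show "x (Suc n) mod 2 ^ n = x n" .
  qed
  then show "x \<in> {x \<in> Z2. x K = c mod 2 ^ K}" unfolding xn by simp
qed

lemma coset2_supset: "{x \<in> Z2. x K = c mod 2 ^ K} \<subseteq> coset2 c K"
proof
  fix x assume "x \<in> {x \<in> Z2. x K = c mod 2 ^ K}"
  then have x: "x \<in> Z2" and xK: "x K = c mod 2 ^ K" by auto
  text \<open>The cofactor \<open>z\<close> is read off the levels \<open>n + K\<close> of \<open>x\<close>.\<close>
  define w where "w n = (x (n + K) - c) div 2 ^ K" for n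
  have wd: "x (n + K) - c = 2 ^ K * w n" for n
  proof -
    have "x (n + K) mod 2 ^ K = c mod 2 ^ K" using Z2_mod[OF x, of K "n + K"] xK by simp
    then show ?thesis unfolding w_def by (simp add: mod_eq_dvd_iff)
  qed
  define z where "z n = w n mod 2 ^ n" for n
  have "z \<in> Z2" unfolding Z2_def
  proof (intro CollectI conjI allI)
    fix n
    show "0 \<le> z n" "z n < 2 ^ n" unfolding z_def by auto
    have "x (Suc n + K) mod 2 ^ (n + K) = x (n + K)" by (rule Z2_mod[OF x]) simp
    then have "2 ^ (n + K) dvd x (Suc n + K) - x (n + K)" by (metis mod_eq_dvd_iff mod_mod_trivial)
    then have "2 ^ K * 2 ^ n dvd 2 ^ K * (w (Suc n) - w n)"
      using wd[of "Suc n"] wd[of n] by (simp add: power_add algebra_simps)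
    then have "w (Suc n) mod 2 ^ n = w n mod 2 ^ n" by (simp add: mod_eq_dvd_iff)
    then show "z (Suc n) mod 2 ^ n = z n" unfolding z_def by (simp add: mod_mod_cancel le_imp_power_dvd)
  qed
  moreover have "x = z2_add (z2_of_int c) (z2_mul (z2_of_int (2 ^ K)) z)"
  proof
    fix n
    have "(c + 2 ^ K * z n) mod 2 ^ n = (c + 2 ^ K * w n) mod 2 ^ n"
      unfolding z_def by (metis mod_add_right_eq mod_mult_right_eq)
    also have "c + 2 ^ K * w n = x (n + K)" using wd[of n] by simp
    also have "x (n + K) mod 2 ^ n = x n" by (rule Z2_mod[OF x]) simp
    finally show "x n = z2_add (z2_of_int c) (z2_mul (z2_of_int (2 ^ K)) z) n"
      unfolding z2_affine_apply by simp
  qed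
  ultimately show "x \<in> coset2 c K" unfolding coset2_def by blast
qed

lemma coset2_eq: "coset2 c K = {x \<in> Z2. x K = c mod 2 ^ K}"
  using coset2_subset coset2_supset by blast

lemma coset2_level_dvd:
  assumes "x \<in> coset2 c K" "K \<le> N"
  shows "x \<in> Z2" "2 ^ K dvd x N - c"
proof -
  show x: "x \<in> Z2" using assms(1) unfolding coset2_eq by blast
  have "x N mod 2 ^ K = c mod 2 ^ K" using Z2_mod[OF x assms(2)] assms(1) unfolding coset2_eq by simp
  then show "2 ^ K dvd x N - c" by (simp add: mod_eq_dvd_iff)
qed

definition pow2_compatible :: "(int \<Rightarrow> int) \<Rightarrow> bool" where
  "pow2_compatible f \<longleftrightarrow> (\<forall>x y n. (2::int) ^ n dvd x - y \<longrightarrow> 2 ^ n dvd f x - f y)"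

definition z2_lift :: "(int \<Rightarrow> int) \<Rightarrow> (nat \<Rightarrow> int) \<Rightarrow> nat \<Rightarrow> int" where
  "z2_lift f x = (\<lambda>n. f (x n) mod 2 ^ n)"

lemma pow2_compatible_mod: "pow2_compatible f \<Longrightarrow> f (x mod 2 ^ n) mod 2 ^ n = f x mod 2 ^ n"
proof -
  assume "pow2_compatible f"
  moreover have "(2::int) ^ n dvd x mod 2 ^ n - x" by (simp add: mod_eq_dvd_iff[symmetric])
  ultimately have "2 ^ n dvd f (x mod 2 ^ n) - f x" unfolding pow2_compatible_def by blast
  then show ?thesis by (simp add: mod_eq_dvd_iff)
qed

lemma chebT_pow2_compatible: "pow2_compatible (chebT k)"
  unfolding pow2_compatible_def using chebT_diff_dvd dvd_trans by blast

lemma preserves_increments_mod4_pow2_compatible: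
  assumes f: "preserves_increments_mod4 f"
  shows "pow2_compatible f"
  unfolding pow2_compatible_def
proof (intro allI impI)
  fix x y :: int and n :: nat
  assume "2 ^ n dvd x - y"
  then obtain t where x: "x = y + 2 ^ n * t" by (metis dvdE add.commute diff_add_cancel)
  show "2 ^ n dvd f x - f y"
  proof (cases "n = 0")
    case False
    then obtain r where "f (y + 2 ^ n * t) = f y + 2 ^ n * (t + 4 * r)"
      using preserves_increments_mod4E[OF f] by (metis less_one not_le)
    then show ?thesis unfolding x by simp
  qed simp
qed

lemma z2_lift_in_Z2:
  assumes f: "pow2_compatible f" and x: "x \<in> Z2"
  shows "z2_lift f x \<in> Z2"
  unfolding Z2_def
proof (intro CollectI conjI allI)
  fix n
  show "0 \<le> z2_lift f x n" "z2_lift f x n < 2 ^ n" unfolding z2_lift_def by auto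
  have "z2_lift f x (Suc n) mod 2 ^ n = f (x (Suc n)) mod 2 ^ n"
    unfolding z2_lift_def by (simp add: mod_mod_cancel le_imp_power_dvd)
  also have "\<dots> = f (x (Suc n) mod 2 ^ n) mod 2 ^ n" by (simp add: pow2_compatible_mod[OF f])
  also have "\<dots> = z2_lift f x n" unfolding z2_lift_def using x unfolding Z2_def by simp
  finally show "z2_lift f x (Suc n) mod 2 ^ n = z2_lift f x n" .
qed

lemma z2_lift_funpow:
  assumes f: "pow2_compatible f" and x: "x \<in> Z2"
  shows "(z2_lift f ^^ k) x \<in> Z2 \<and> (z2_lift f ^^ k) x n = (f ^^ k) (x n) mod 2 ^ n"
proof (induction k)
  case (Suc k)
  have "(z2_lift f ^^ Suc k) x n = f ((z2_lift f ^^ k) x n) mod 2 ^ n"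
    by (simp add: z2_lift_def)
  then have "(z2_lift f ^^ Suc k) x n = f ((f ^^ k) (x n) mod 2 ^ n) mod 2 ^ n"
    using Suc by simp
  then show ?case using Suc z2_lift_in_Z2[OF f] by (simp add: pow2_compatible_mod[OF f])
qed (simp add: x Z2_mod_self)

lemma Tz_eq_z2_lift: "2 \<le> m \<Longrightarrow> Tz m = z2_lift (chebT m)"
  unfolding Tz_def z2_lift_def by (simp add: cheb_int_eq_chebT)

lemma Tz_z2_of_int: "2 \<le> m \<Longrightarrow> Tz m (z2_of_int c) = z2_of_int (chebT m c)"
  by (rule ext) (simp add: Tz_eq_z2_lift z2_lift_def z2_of_int_def chebT_mod)

context coset_odometer
begin

lemma z2_lift_coset2_subset: "z2_lift f ` coset2 b K \<subseteq> coset2 b K"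
proof
  fix y assume "y \<in> z2_lift f ` coset2 b K"
  then obtain x where x: "x \<in> coset2 b K" and y: "y = z2_lift f x" by blast
  have x': "x \<in> Z2" "2 ^ K dvd x K - b" using coset2_level_dvd[OF x] by auto
  have "2 ^ K dvd (f ^^ 1) (x K) - b" by (rule funpow_in_coset[OF x'(2)])
  then have "y K = b mod 2 ^ K" unfolding y z2_lift_def by (simp add: mod_eq_dvd_iff)
  moreover have "y \<in> Z2" unfolding y
    by (rule z2_lift_in_Z2[OF preserves_increments_mod4_pow2_compatible[OF increments] x'(1)])
  ultimately show "y \<in> coset2 b K" unfolding coset2_eq by simp
qed

lemma z2_lift_minimal_on_coset2: "minimal_on (z2_lift f) (coset2 b K)"
  unfolding minimal_on_def
proof (intro ballI allI impI)
  fix x y and e :: real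
  assume x: "x \<in> coset2 b K" and y: "y \<in> coset2 b K" and e: "0 < e"
  have f: "pow2_compatible f" by (rule preserves_increments_mod4_pow2_compatible[OF increments])
  obtain N where N: "(1/2::real) ^ N < e" "K \<le> N" using exists_pow_half_less[OF e] by blast
  note x' = coset2_level_dvd[OF x N(2)] and y' = coset2_level_dvd[OF y N(2)]
  obtain k where k: "2 ^ N dvd (f ^^ k) (x N) - y N" using orbit_hits_residue[OF x'(2) y'(2)] by blast
  have "(z2_lift f ^^ k) x N = (f ^^ k) (x N) mod 2 ^ N" using z2_lift_funpow[OF f x'(1)] by blast
  also have "\<dots> = y N mod 2 ^ N" using k by (simp add: mod_eq_dvd_iff)
  also have "\<dots> = y N" by (rule Z2_mod_self[OF y'(1)])
  finally have "z2_dist ((z2_lift f ^^ k) x) y \<le> (1/2) ^ N"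
    using z2_lift_funpow[OF f x'(1)] y'(1) by (intro z2_dist_le) auto
  then show "\<exists>k. z2_dist ((z2_lift f ^^ k) x) y < e" using N by (intro exI[of _ k]) simp
qed

end

section \<open>The pieces\<close>

definition piece_origin :: "nat \<Rightarrow> int" where
  "piece_origin j = (if j = 1 then 0 else if j = 2 then 1 else -1)"

definition piece_base :: "nat \<times> nat \<times> nat \<Rightarrow> int" where
  "piece_base J = (case J of (j, n, i) \<Rightarrow> piece_origin j + 2 ^ n * (1 + 2 * int i))"

definition piece_level :: "nat \<Rightarrow> nat \<times> nat \<times> nat \<Rightarrow> nat" where
  "piece_level s J = (case J of (j, n, i) \<Rightarrow> if j = 1 then n + s else n + s + 1)"

lemma Epiece_eq_coset2: "Epiece s J = coset2 (piece_base J) (piece_level s J)"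
  by (cases J) (auto simp: Epiece_def piece_base_def piece_level_def piece_origin_def)

lemma EidxE:
  assumes "J \<in> Eidx s"
  obtains j n i where "J = (j, n, i)" "j \<in> {1, 2, 3}" "1 \<le> n" "j \<noteq> 1 \<Longrightarrow> 2 \<le> n"
    "piece_level s J = n + s + (if j = 1 then 0 else 1)" "i < 2 ^ (piece_level s J - n - 1)"
  using assms unfolding Eidx_def piece_level_def by auto

lemma exact_pow2_sq_minus_one:
  fixes v e :: int
  assumes n: "2 \<le> n" and v: "odd v" and e: "e = 1 \<or> e = -1"
  shows "exact_pow2 (n + 1) ((e + 2 ^ n * v)\<^sup>2 - 1)"
proof -
  obtain n' where n': "n = Suc n'" "1 \<le> n'" using n by (cases n) auto
  have "even ((2::int) ^ n' * v)" using n'(2) by simp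
  then have "odd (e + 2 ^ n' * v)" "(e + 2 ^ n * v)\<^sup>2 - 1 = 2 ^ (n + 1) * (v * (e + 2 ^ n' * v))"
    using e unfolding n' by (auto simp: power2_eq_square algebra_simps)
  then show ?thesis unfolding exact_pow2_def using v by auto
qed

lemma exact_pow2_chebT_minus_id_on_piece:
  assumes m: "odd m" "2 \<le> m" and J: "J \<in> Eidx (s_of m)"
    and x: "2 ^ piece_level (s_of m) J dvd x - piece_base J"
  shows "exact_pow2 (piece_level (s_of m) J) (chebT m x - x)"
proof -
  define s where "s = s_of m"
  obtain a q where a: "m = 2 * a + 1" and q: "odd q" and aq: "a = 2 ^ (s - 1) * q \<or> Suc a = 2 ^ (s - 1) * q"
    using odd_decomp_s_of[OF m] unfolding s_def by blast
  have s2: "2 \<le> s" using s_of_greatest(1)[OF m] unfolding s_def .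
  obtain j n i where Jd: "J = (j, n, i)" "j \<in> {1, 2, 3}" "1 \<le> n" "j \<noteq> 1 \<Longrightarrow> 2 \<le> n"
    and K: "piece_level s J = n + s + (if j = 1 then 0 else 1)"
    using EidxE[OF J] unfolding s_def by blast
  obtain t where t: "x - piece_base J = 2 ^ piece_level s J * t" using x unfolding s_def by (meson dvdE)
  show ?thesis
  proof (cases "j = 1")
    case True
    then have "x = 2 ^ n * (1 + 2 * int i + 2 ^ s * t)"
      using t K unfolding Jd piece_base_def piece_origin_def by (simp add: power_add algebra_simps)
    moreover have "odd (1 + 2 * int i + 2 ^ s * t)" using s2 by simp
    ultimately have "exact_pow2 n x" unfolding exact_pow2_def by blast
    then show ?thesis
      using exact_pow2_chebT_odd_minus_id_even_arg[OF q s2 aq _ Jd(3)] K True a unfolding s_def by simp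
  next
    case False
    define v where "v = 1 + 2 * int i + 2 ^ (s + 1) * t"
    have x: "x = piece_origin j + 2 ^ n * v"
      using t K False unfolding Jd piece_base_def v_def by (simp add: power_add algebra_simps)
    have e: "piece_origin j = 1 \<or> piece_origin j = -1" using False unfolding piece_origin_def by auto
    have "odd x" unfolding x using e Jd(3) by (cases n) auto
    moreover have "exact_pow2 (n + 1) (x\<^sup>2 - 1)"
      unfolding x by (rule exact_pow2_sq_minus_one) (use Jd(4) False e v_def in auto)
    ultimately show ?thesis
      using exact_pow2_chebT_odd_minus_id_odd_arg[OF q s2 aq] K False a unfolding s_def by simp
  qed
qed

lemma piece_coset_odometer:
  assumes m: "odd m" "2 \<le> m" and J: "J \<in> Eidx (s_of m)"
  shows "coset_odometer (chebT m) (piece_base J) (piece_level (s_of m) J)"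
proof
  show "preserves_increments_mod4 (chebT m)" by (rule chebT_odd_preserves_increments_mod4[OF m(1)])
  show "1 \<le> piece_level (s_of m) J" by (rule EidxE[OF J]) simp
  show "2 ^ (piece_level (s_of m) J + 1) dvd chebT m x - (x + 2 ^ piece_level (s_of m) J)"
    if "2 ^ piece_level (s_of m) J dvd x - piece_base J" for x
    using exact_pow2_dvd_diff[OF exact_pow2_chebT_minus_id_on_piece[OF m J that]] by (simp add: algebra_simps)
qed

lemma Z2_first_difference:
  assumes x: "x \<in> Z2" and ne: "x \<noteq> z2_of_int c" and M: "x M = c mod 2 ^ M"
  obtains n where "M \<le> n" "x n = c mod 2 ^ n" "x (Suc n) \<noteq> c mod 2 ^ Suc n"
proof -
  have ex: "\<exists>N. x N \<noteq> c mod 2 ^ N" using ne unfolding z2_of_int_def by auto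
  define N where "N = (LEAST N. x N \<noteq> c mod 2 ^ N)"
  have N1: "x N \<noteq> c mod 2 ^ N" unfolding N_def by (rule LeastI_ex[OF ex])
  have N2: "x k = c mod 2 ^ k" if "k < N" for k using not_less_Least[of k] that unfolding N_def by blast
  have "M < N"
  proof (rule ccontr)
    assume "\<not> M < N"
    then have "x N = c mod 2 ^ N"
      using Z2_mod[OF x, of N M] M by (simp add: mod_mod_cancel le_imp_power_dvd)
    then show False using N1 by simp
  qed
  then obtain n where "N = Suc n" "M \<le> n" by (cases N) auto
  then show ?thesis using that N1 N2 by auto
qed

lemma odd_mod_pow2_repr:
  fixes u :: int
  assumes "odd u" "0 < r"
  obtains i where "i < 2 ^ (r - 1)" "u mod 2 ^ r = 1 + 2 * int i"
proof -
  define w where "w = u mod 2 ^ r"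
  have w: "0 \<le> w" "w < 2 ^ r" unfolding w_def by auto
  have "(2::int) dvd 2 ^ r" using assms(2) by simp
  then have "w mod 2 = u mod 2" unfolding w_def by (simp add: mod_mod_cancel)
  then have "odd w" using assms(1) by (simp add: odd_iff_mod_2_eq_one)
  then have w_eq: "w = 1 + 2 * int (nat (w div 2))" using w(1) by (simp, presburger)
  moreover have "(2::int) ^ r = 2 * 2 ^ (r - 1)" using assms(2) by (simp flip: power_Suc)
  ultimately have "int (nat (w div 2)) < 2 ^ (r - 1)" using w(2) by linarith
  then have "nat (w div 2) < 2 ^ (r - 1)" using w(1) by (simp add: nat_less_iff)
  then show ?thesis using that w_eq unfolding w_def by blast
qed

lemma Z2_coset_at_first_difference:
  assumes x: "x \<in> Z2" and n1: "x n = c mod 2 ^ n" and n2: "x (Suc n) \<noteq> c mod 2 ^ Suc n" and K: "n < K"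
  obtains i where "i < 2 ^ (K - n - 1)" "x \<in> coset2 (c + 2 ^ n * (1 + 2 * int i)) K"
proof -
  have "x K mod 2 ^ n = c mod 2 ^ n" using Z2_mod[OF x, of n K] K n1 by simp
  then obtain u where u: "x K - c = 2 ^ n * u" by (metis dvdE mod_eq_dvd_iff)
  have "odd u"
  proof
    assume "even u"
    then have "2 ^ Suc n dvd x K - c" unfolding u by auto
    then have "x K mod 2 ^ Suc n = c mod 2 ^ Suc n" by (simp add: mod_eq_dvd_iff)
    then show False using n2 Z2_mod[OF x, of "Suc n" K] K by simp
  qed
  then obtain i where i: "i < 2 ^ (K - n - 1)" "u mod 2 ^ (K - n) = 1 + 2 * int i"
    using odd_mod_pow2_repr[of u "K - n"] K by auto
  have "c + 2 ^ n * u = x K" using u by simp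
  then have "x K = (c + 2 ^ n * u) mod 2 ^ K" using Z2_mod_self[OF x, of K] by simp
  also have "\<dots> = (c + (2 ^ n * u) mod (2 ^ n * 2 ^ (K - n))) mod 2 ^ K"
    using K by (simp flip: power_add add: mod_add_right_eq)
  also have "\<dots> = (c + 2 ^ n * (1 + 2 * int i)) mod 2 ^ K"
    by (simp only: mod_mult_mult1 i(2))
  finally show ?thesis using that i(1) x unfolding coset2_eq by blast
qed

lemma Z2_in_piece_of_origin:
  assumes x: "x \<in> Z2" and j: "j \<in> {1, 2, 3}" and s: "2 \<le> s"
    and ne: "x \<noteq> z2_of_int (piece_origin j)"
    and M: "M = (if j = 1 then 1 else 2)" "x M = piece_origin j mod 2 ^ M"
  shows "\<exists>J\<in>Eidx s. x \<in> Epiece s J"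
proof -
  obtain n where n: "M \<le> n" "x n = piece_origin j mod 2 ^ n" "x (Suc n) \<noteq> piece_origin j mod 2 ^ Suc n"
    using Z2_first_difference[OF x ne M(2)] by blast
  define K where "K = n + s + (if j = 1 then 0 else 1)"
  obtain i where i: "i < 2 ^ (K - n - 1)" "x \<in> coset2 (piece_origin j + 2 ^ n * (1 + 2 * int i)) K"
    using Z2_coset_at_first_difference[OF x n(2,3), of K] s unfolding K_def by auto
  have "(j, n, i) \<in> Eidx s" using i(1) j n(1) M(1) unfolding Eidx_def K_def by auto
  moreover have "x \<in> Epiece s (j, n, i)"
    using i(2) unfolding Epiece_eq_coset2 piece_base_def piece_level_def K_def by (cases "j = 1") auto
  ultimately show ?thesis by blast
qed

lemma Z2_covered_by_pieces:
  assumes x: "x \<in> Z2" and s: "2 \<le> s" and ne: "x \<notin> {z2_of_int 0, z2_of_int 1, z2_of_int (-1)}"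
  shows "\<exists>J\<in>Eidx s. x \<in> Epiece s J"
proof -
  have "x 2 mod 2 = x 1" using Z2_mod[OF x, of 1 2] by simp
  moreover have "0 \<le> x 2" "x 2 < 4" using Z2_bounds[OF x, of 2] by auto
  ultimately have "x 1 = 0 \<or> x 2 = 1 \<or> x 2 = 3" by presburger
  then consider "x 1 = 0" | "x 2 = 1" | "x 2 = 3" by blast
  then show ?thesis
  proof cases
    case 1
    then show ?thesis using ne by (intro Z2_in_piece_of_origin[OF x _ s, of 1 1]) (auto simp: piece_origin_def)
  next
    case 2
    then show ?thesis using ne by (intro Z2_in_piece_of_origin[OF x _ s, of 2 2]) (auto simp: piece_origin_def)
  next
    case 3
    then show ?thesis using ne by (intro Z2_in_piece_of_origin[OF x _ s, of 3 2]) (auto simp: piece_origin_def)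
  qed
qed

lemma coset2_common_point:
  assumes x: "x \<in> coset2 b K" "x \<in> coset2 b' K'" and L: "L \<le> K" "L \<le> K'"
  shows "2 ^ L dvd b - b'"
proof -
  have "2 ^ K dvd x (max K K') - b" "2 ^ K' dvd x (max K K') - b'"
    using coset2_level_dvd(2)[OF x(1)] coset2_level_dvd(2)[OF x(2)] by auto
  moreover have "(2::int) ^ L dvd 2 ^ K" "(2::int) ^ L dvd 2 ^ K'" using L by (simp_all add: le_imp_power_dvd)
  ultimately have "2 ^ L dvd (x (max K K') - b') - (x (max K K') - b)" by (meson dvd_diff dvd_trans)
  then show ?thesis by simp
qed

lemma z2_of_int_in_coset2: "z2_of_int c \<in> coset2 c K"
  unfolding coset2_eq using z2_of_int_in_Z2 by (simp add: z2_of_int_def)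

lemma not_pow2_Suc_dvd_odd_multiple: "\<not> (2::int) ^ (n + 1) dvd 2 ^ n * (1 + 2 * int i)"
  by (simp add: power_add)

lemma odd_multiples_pow2_exponent_eq:
  assumes nn: "n \<le> n'" and d: "(2::int) ^ (n + 1) dvd 2 ^ n * (1 + 2 * int i) - 2 ^ n' * (1 + 2 * int i')"
  shows "n = n'"
proof (rule ccontr)
  assume "n \<noteq> n'"
  then have "(2::int) ^ (n + 1) dvd 2 ^ n'" using nn by (intro le_imp_power_dvd) simp
  then have "(2::int) ^ (n + 1) dvd 2 ^ n' * (1 + 2 * int i')" by (rule dvd_mult2)
  then have "(2::int) ^ (n + 1) dvd (2 ^ n * (1 + 2 * int i) - 2 ^ n' * (1 + 2 * int i')) + 2 ^ n' * (1 + 2 * int i')"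
    using d by (rule dvd_add[rotated])
  then show False using not_pow2_Suc_dvd_odd_multiple[of n i] by simp
qed

lemma odd_multiples_pow2_index_eq:
  assumes d: "(2::int) ^ (n + t) dvd 2 ^ n * (1 + 2 * int i) - 2 ^ n * (1 + 2 * int i')"
    and t: "1 \<le> t" and i: "i < 2 ^ (t - 1)" "i' < 2 ^ (t - 1)"
  shows "i = i'"
proof -
  have "(2::int) ^ n * (2 * 2 ^ (t - 1)) dvd 2 ^ n * (2 * (int i - int i'))"
    using d t by (simp add: power_add algebra_simps flip: power_Suc)
  then have "(2::int) * 2 ^ (t - 1) dvd 2 * (int i - int i')"
    by (metis dvd_mult_cancel_left power_not_zero zero_neq_numeral)
  then have "(2::int) ^ (t - 1) dvd int i - int i'"
    by (metis dvd_mult_cancel_left zero_neq_numeral)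
  then have "int i mod 2 ^ (t - 1) = int i' mod 2 ^ (t - 1)" by (simp add: mod_eq_dvd_iff)
  moreover have "int i < 2 ^ (t - 1)" "int i' < 2 ^ (t - 1)" using i by (simp_all add: of_nat_less_iff[symmetric])
  ultimately show ?thesis by simp
qed

text \<open>The residue class modulo 4 of a base tells which of \<open>0, 1, -1\<close> its piece accumulates at.\<close>

lemma piece_origin_separated:
  assumes "j \<in> {1, 2, 3}" "j' \<in> {1, 2, 3}" "j \<noteq> j'"
    and "2 dvd A" "j \<noteq> 1 \<Longrightarrow> 4 dvd A" and "2 dvd A'" "j' \<noteq> 1 \<Longrightarrow> 4 dvd A'"
  shows "\<not> 4 dvd (piece_origin j + A) - (piece_origin j' + A')"
  using assms unfolding piece_origin_def by (auto; presburger)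

lemma piece_offset_dvd:
  assumes "1 \<le> n"
  shows "2 dvd (2::int) ^ n * (1 + 2 * int i)" and "2 \<le> n \<Longrightarrow> 4 dvd (2::int) ^ n * (1 + 2 * int i)"
proof -
  show "2 dvd (2::int) ^ n * (1 + 2 * int i)" using assms by simp
  show "4 dvd (2::int) ^ n * (1 + 2 * int i)" if "2 \<le> n"
    using le_imp_power_dvd[OF that, of "2::int"] by simp
qed

lemma pieces_disjoint:
  assumes s: "2 \<le> s" and J: "J \<in> Eidx s" and J': "J' \<in> Eidx s"
    and x: "x \<in> Epiece s J" "x \<in> Epiece s J'"
  shows "J = J'"
proof -
  obtain j n i where Jd: "J = (j, n, i)" "j \<in> {1, 2, 3}" "1 \<le> n" "j \<noteq> 1 \<Longrightarrow> 2 \<le> n"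
    "piece_level s J = n + s + (if j = 1 then 0 else 1)" "i < 2 ^ (piece_level s J - n - 1)"
    using EidxE[OF J] by blast
  obtain j' n' i' where Jd': "J' = (j', n', i')" "j' \<in> {1, 2, 3}" "1 \<le> n'" "j' \<noteq> 1 \<Longrightarrow> 2 \<le> n'"
    "piece_level s J' = n' + s + (if j' = 1 then 0 else 1)" "i' < 2 ^ (piece_level s J' - n' - 1)"
    using EidxE[OF J'] by blast
  define A where "A = (2::int) ^ n * (1 + 2 * int i)"
  define A' where "A' = (2::int) ^ n' * (1 + 2 * int i')"
  have common: "L \<le> piece_level s J \<Longrightarrow> L \<le> piece_level s J' \<Longrightarrow>
      (2::int) ^ L dvd (piece_origin j + A) - (piece_origin j' + A')" for L
    using coset2_common_point[of x] x unfolding Epiece_eq_coset2 Jd(1) Jd'(1) A_def A'_def piece_base_def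
    by simp
  have jj: "j = j'"
  proof (rule ccontr)
    assume "j \<noteq> j'"
    moreover have "(2::int) ^ 2 dvd (piece_origin j + A) - (piece_origin j' + A')"
      by (rule common) (use Jd(5) Jd'(5) s in auto)
    ultimately show False
      using piece_origin_separated[OF Jd(2) Jd'(2)] piece_offset_dvd[OF Jd(3)] piece_offset_dvd[OF Jd'(3)] Jd(4) Jd'(4)
      unfolding A_def A'_def by auto
  qed
  have "(2::int) ^ (min n n' + 1) dvd A - A'"
    using common[of "min n n' + 1"] Jd(5) Jd'(5) s unfolding jj by auto
  then have nn: "n = n'" unfolding A_def A'_def
    using odd_multiples_pow2_exponent_eq[of n n' i i'] odd_multiples_pow2_exponent_eq[of n' n i' i]
    by (cases "n \<le> n'") (auto simp: min_def dvd_diff_commute)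
  define t where "t = s + (if j = 1 then 0 else 1)"
  have "(2::int) ^ (n + t) dvd A - A'"
    using common[of "n + t"] Jd(5) Jd'(5) unfolding jj nn t_def by simp
  then have "i = i'" unfolding A_def A'_def nn
    by (rule odd_multiples_pow2_index_eq) (use s Jd(5,6) Jd'(5,6) jj nn t_def in auto)
  then show ?thesis using Jd(1) Jd'(1) jj nn by simp
qed

lemma fixed_point_not_in_piece:
  assumes s: "2 \<le> s" and J: "J \<in> Eidx s" and c: "c \<in> {0, 1, -1}"
  shows "z2_of_int c \<notin> Epiece s J"
proof
  assume x: "z2_of_int c \<in> Epiece s J"
  obtain j n i where Jd: "J = (j, n, i)" "j \<in> {1, 2, 3}" "1 \<le> n" "j \<noteq> 1 \<Longrightarrow> 2 \<le> n"
    "piece_level s J = n + s + (if j = 1 then 0 else 1)"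
    using EidxE[OF J] by blast
  have "c = piece_origin 1 \<or> c = piece_origin 2 \<or> c = piece_origin 3" using c by (auto simp: piece_origin_def)
  then obtain jc where jc: "jc \<in> {1, 2, 3}" "c = piece_origin jc" by blast
  define A where "A = (2::int) ^ n * (1 + 2 * int i)"
  have common: "L \<le> piece_level s J \<Longrightarrow> (2::int) ^ L dvd (piece_origin jc + 0) - (piece_origin j + A)" for L
    using coset2_common_point[OF z2_of_int_in_coset2 x[unfolded Epiece_eq_coset2]]
    unfolding Jd(1) A_def piece_base_def jc(2) by simp
  show False
  proof (cases "j = jc")
    case True
    have "(2::int) ^ (n + 1) dvd (piece_origin jc + 0) - (piece_origin j + A)"
      by (rule common) (use Jd(5) s in auto)
    then show False using not_pow2_Suc_dvd_odd_multiple[of n i] unfolding A_def True by simp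
  next
    case False
    have "(2::int) ^ 2 dvd (piece_origin jc + 0) - (piece_origin j + A)"
      by (rule common) (use Jd(5) s in auto)
    moreover have "\<not> 4 dvd (piece_origin j + A) - (piece_origin jc + 0)"
      by (rule piece_origin_separated[OF Jd(2) jc(1) False]) (use piece_offset_dvd[OF Jd(3)] Jd(4) A_def in auto)
    ultimately show False by (simp add: dvd_diff_commute)
  qed
qed

section \<open>The even case\<close>

lemma chebT_even_funpow_near_one: "even m \<Longrightarrow> (2::int) ^ k dvd (chebT m ^^ k) y - 1"
proof (induction k)
  case (Suc k)
  then obtain j where "m = 2 * j" by blast
  then show ?case using chebT_even_near_one[OF Suc.IH[OF Suc.prems], of j] by simp
qed simp

lemma Tz_even_contracts:
  assumes m: "even m" "2 \<le> m" and x: "x \<in> Z2" and d: "z2_dist x (z2_of_int 1) < 1"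
  shows "z2_dist (Tz m x) (z2_of_int 1) \<le> 1/2 * z2_dist x (z2_of_int 1)"
proof (cases "x = z2_of_int 1")
  case True
  then show ?thesis by (simp add: Tz_z2_of_int[OF m(2)] chebT_one z2_dist_def)
next
  case False
  obtain j where j: "m = 2 * j" using m(1) by blast
  obtain g where g: "z2_dist x (z2_of_int 1) = (1/2) ^ g" "x g = z2_of_int 1 g"
    using z2_dist_eq_pow[OF x z2_of_int_in_Z2 False] by blast
  have "g \<noteq> 0" using g(1) d by (cases g) auto
  then have one: "(1::int) mod 2 ^ g = 1" by (simp add: one_less_power)
  have "x (Suc g) mod 2 ^ g = x g" by (rule Z2_mod[OF x]) simp
  then have "x (Suc g) mod 2 ^ g = 1 mod 2 ^ g" using g(2) one by (simp add: z2_of_int_def)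
  then have "2 ^ g dvd x (Suc g) - 1" by (simp only: mod_eq_dvd_iff)
  then have "2 ^ (g + 1) dvd chebT m (x (Suc g)) - 1" unfolding j by (rule chebT_even_near_one)
  then have "chebT m (x (Suc g)) mod 2 ^ Suc g = 1 mod 2 ^ Suc g"
    by (metis Suc_eq_plus1 mod_eq_dvd_iff)
  then have "Tz m x (Suc g) = z2_of_int 1 (Suc g)"
    unfolding Tz_eq_z2_lift[OF m(2)] z2_lift_def z2_of_int_def .
  moreover have "Tz m x \<in> Z2"
    unfolding Tz_eq_z2_lift[OF m(2)] by (rule z2_lift_in_Z2[OF chebT_pow2_compatible x])
  ultimately have "z2_dist (Tz m x) (z2_of_int 1) \<le> (1/2) ^ Suc g"
    using z2_dist_le z2_of_int_in_Z2 by blast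
  then show ?thesis using g(1) by simp
qed

lemma Tz_even_converges:
  assumes m: "even m" "2 \<le> m" and x: "x \<in> Z2" and e: "0 < e"
  shows "\<exists>K. \<forall>k\<ge>K. z2_dist ((Tz m ^^ k) x) (z2_of_int 1) < e"
proof -
  obtain K where K: "(1/2::real) ^ K < e" using exists_pow_half_less[OF e] by blast
  note lift = z2_lift_funpow[OF chebT_pow2_compatible[of m] x, folded Tz_eq_z2_lift[OF m(2)]]
  have "z2_dist ((Tz m ^^ k) x) (z2_of_int 1) < e" if k: "K \<le> k" for k
  proof -
    have "((Tz m ^^ k) x) k = (chebT m ^^ k) (x k) mod 2 ^ k" using lift by blast
    also have "\<dots> = z2_of_int 1 k"
      unfolding z2_of_int_def using chebT_even_funpow_near_one[OF m(1)] by (simp only: mod_eq_dvd_iff)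
    finally have "z2_dist ((Tz m ^^ k) x) (z2_of_int 1) \<le> (1/2) ^ k"
      using lift z2_of_int_in_Z2 z2_dist_le by blast
    also have "(1/2::real) ^ k \<le> (1/2) ^ K" using k by (intro power_decreasing) auto
    finally show ?thesis using K by linarith
  qed
  then show ?thesis by blast
qed

theorem theorem2:
  fixes m :: nat
  assumes "m \<ge> 2"
  shows "(even m \<longrightarrow>
            Tz m (z2_of_int 1) = z2_of_int 1
          \<and> (\<exists>r>0. \<exists>c<1. \<forall>x\<in>Z2. z2_dist x (z2_of_int 1) < r \<longrightarrow>
                 z2_dist (Tz m x) (z2_of_int 1) \<le> c * z2_dist x (z2_of_int 1))
          \<and> (\<forall>x\<in>Z2. \<forall>e>0. \<exists>K. \<forall>k\<ge>K. z2_dist ((Tz m ^^ k) x) (z2_of_int 1) < e))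
       \<and> (odd m \<longrightarrow>
            s_of m \<ge> 2
          \<and> Z2 = {z2_of_int 0, z2_of_int 1, z2_of_int (-1)} \<union> (\<Union>j\<in>Eidx (s_of m). Epiece (s_of m) j)
          \<and> (\<forall>j\<in>Eidx (s_of m). Epiece (s_of m) j \<inter> {z2_of_int 0, z2_of_int 1, z2_of_int (-1)} = {})
          \<and> (\<forall>j\<in>Eidx (s_of m). \<forall>j'\<in>Eidx (s_of m). j \<noteq> j' \<longrightarrow>
                 Epiece (s_of m) j \<inter> Epiece (s_of m) j' = {})
          \<and> Tz m (z2_of_int 0) = z2_of_int 0
          \<and> Tz m (z2_of_int 1) = z2_of_int 1
          \<and> Tz m (z2_of_int (-1)) = z2_of_int (-1)
          \<and> (\<forall>j\<in>Eidx (s_of m). Tz m ` Epiece (s_of m) j \<subseteq> Epiece (s_of m) j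
                 \<and> minimal_on (Tz m) (Epiece (s_of m) j)))"
proof (intro conjI impI)
  assume "even m"
  show "Tz m (z2_of_int 1) = z2_of_int 1" by (simp add: Tz_z2_of_int[OF assms] chebT_one)
  show "\<exists>r>0. \<exists>c<1. \<forall>x\<in>Z2. z2_dist x (z2_of_int 1) < r \<longrightarrow>
      z2_dist (Tz m x) (z2_of_int 1) \<le> c * z2_dist x (z2_of_int 1)"
    using Tz_even_contracts[OF \<open>even m\<close> assms] by (intro exI[of _ 1]) (auto intro!: exI[of _ "1/2"])
  show "\<forall>x\<in>Z2. \<forall>e>0. \<exists>K. \<forall>k\<ge>K. z2_dist ((Tz m ^^ k) x) (z2_of_int 1) < e"
    using Tz_even_converges[OF \<open>even m\<close> assms] by blast
next
  assume "odd m"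
  then have s: "2 \<le> s_of m" using s_of_greatest(1) assms by blast
  then show "s_of m \<ge> 2" .
  show "Z2 = {z2_of_int 0, z2_of_int 1, z2_of_int (-1)} \<union> (\<Union>j\<in>Eidx (s_of m). Epiece (s_of m) j)"
    using Z2_covered_by_pieces[OF _ s] z2_of_int_in_Z2 by (auto simp: Epiece_eq_coset2 coset2_eq)
  show "\<forall>j\<in>Eidx (s_of m). Epiece (s_of m) j \<inter> {z2_of_int 0, z2_of_int 1, z2_of_int (-1)} = {}"
    using fixed_point_not_in_piece[OF s] by auto
  show "\<forall>j\<in>Eidx (s_of m). \<forall>j'\<in>Eidx (s_of m). j \<noteq> j' \<longrightarrow> Epiece (s_of m) j \<inter> Epiece (s_of m) j' = {}"
    using pieces_disjoint[OF s] by blast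
  show "Tz m (z2_of_int 0) = z2_of_int 0" "Tz m (z2_of_int 1) = z2_of_int 1"
    "Tz m (z2_of_int (-1)) = z2_of_int (-1)"
    using \<open>odd m\<close> by (simp_all add: Tz_z2_of_int[OF assms] chebT_zero chebT_one chebT_minus_one)
  show "\<forall>j\<in>Eidx (s_of m). Tz m ` Epiece (s_of m) j \<subseteq> Epiece (s_of m) j \<and> minimal_on (Tz m) (Epiece (s_of m) j)"
  proof
    fix J assume "J \<in> Eidx (s_of m)"
    then interpret coset_odometer "chebT m" "piece_base J" "piece_level (s_of m) J"
      by (rule piece_coset_odometer[OF \<open>odd m\<close> assms])
    show "Tz m ` Epiece (s_of m) J \<subseteq> Epiece (s_of m) J \<and> minimal_on (Tz m) (Epiece (s_of m) J)"
      unfolding Epiece_eq_coset2 Tz_eq_z2_lift[OF assms]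
      using z2_lift_coset2_subset z2_lift_minimal_on_coset2 by blast
  qed
qed

end
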